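(* Let $B\in\mathbb{R}^{n\times n}$ be symmetric and invertible, partitioned into $p\times p$ blocks $B_{st}\in\mathbb{R}^{n_s\times n_t}$, and let $\hat B$ be its strictly block upper triangular part ($\hat B_{st}=B_{st}$ if $s<t$, $0$ otherwise). For any $\beta\in(0,\frac1{\rho(B)})$ and $t\in[0,1]$, if $\lambda$ is an eigenvalue of $(\beta B)^{-1}(I_n+t\beta\hat B)$ with $\mathrm{Re}(\lambda)>0$, then $$\mathrm{Re}(\lambda)\ge\frac12+\frac{1-\beta\rho(B)}{\beta\rho(B)}>\frac12.$$
   Context: $n_1,\dots,n_p$ are positive integers with $\sum_sn_s=n$; $\rho(B)$ denotes the spectral radius of $B$. *)

theory Defs
  imports "Jordan_Normal_Form.Spectral_Radius" "Jordan_Normal_Form.Gauss_Jordan_Elimination"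
begin

text \<open>Block structure: the list ns = [n_1,...,n_p] of positive block sizes, sum n.
  Index i (0-based) lies in block s (0-based) iff
  n_1+...+n_s <= i < n_1+...+n_(s+1).\<close>
definition block_of :: "nat list \<Rightarrow> nat \<Rightarrow> nat" where
  "block_of ns i = (LEAST s. i < sum_list (take (Suc s) ns))"

definition block_strict_upper :: "nat list \<Rightarrow> real mat \<Rightarrow> real mat" where
  "block_strict_upper ns B =
     mat (dim_row B) (dim_col B)
       (\<lambda>(i,j). if block_of ns i < block_of ns j then B $$ (i,j) else 0)"

text \<open>Matrix inverse (library Gauss-Jordan inverse; only used for invertible matrices).\<close>
definition inv_mat :: "'a :: field mat \<Rightarrow> 'a mat" where
  "inv_mat A = the (mat_inverse A)"

end

theory Submission
  imports Defs
begin

text \<open>Let \<open>(\<lambda>, v)\<close> be an eigenpair, so \<open>(I + t \<beta> B') v = \<lambda> \<beta> B v\<close>, where \<open>B'\<close> is the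
  strictly block upper part of \<open>B\<close>. Pairing with \<open>v\<close> gives
  \<open>\<lambda> \<beta> b = |v|\<^sup>2 + t \<beta> (v\<^sup>* B' v)\<close> with \<open>b = v\<^sup>* B v\<close> real. By symmetry
  \<open>B = B' + B'\<^sup>T + D\<close> with \<open>D\<close> block diagonal, so \<open>b = 2a + d\<close> where
  \<open>a = Re (v\<^sup>* B' v)\<close> and \<open>d = v\<^sup>* D v\<close>. The Rayleigh bounds \<open>|b| \<le> \<rho> |v|\<^sup>2\<close> and
  \<open>d \<le> \<rho> |v|\<^sup>2\<close> (the blocks of \<open>D\<close> are principal submatrices of \<open>B\<close>) then force \<open>b > 0\<close>
  and in fact \<open>Re \<lambda> \<ge> 1 / (\<beta> \<rho>)\<close>, which is stronger than the claim.

  The Rayleigh bound \<open>|v\<^sup>* S v| \<le> \<rho>(S) |v|\<^sup>2\<close> for real symmetric \<open>S\<close> is obtained without the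
  spectral theorem: Cauchy-Schwarz gives \<open>|v\<^sup>* S v|\<^sup>2 \<le> |v|\<^sup>2 (v\<^sup>* S\<^sup>2 v)\<close>, so for a unit
  vector the \<open>2\<^sup>m\<close>-th power of the Rayleigh quotient of \<open>S\<close> is dominated by that of
  \<open>S\<^sup>2\<^sup>m\<close>, whose entries stay bounded when \<open>\<rho>(S) < 1\<close>.\<close>

lemma sum_product_square_le:
  fixes a b :: "nat \<Rightarrow> real"
  shows "(\<Sum>i<n. a i * b i)\<^sup>2 \<le> (\<Sum>i<n. (a i)\<^sup>2) * (\<Sum>i<n. (b i)\<^sup>2)"
proof -
  have "0 \<le> (\<Sum>i<n. \<Sum>j<n. (a i * b j - a j * b i)\<^sup>2)"
    by (intro sum_nonneg) auto
  also have "\<dots> = (\<Sum>i<n. \<Sum>j<n. (a i)\<^sup>2 * (b j)\<^sup>2) + (\<Sum>i<n. \<Sum>j<n. (a j)\<^sup>2 * (b i)\<^sup>2)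
       - 2 * (\<Sum>i<n. \<Sum>j<n. (a i * b i) * (a j * b j))"
    by (simp add: power2_eq_square algebra_simps sum_subtractf sum.distrib sum_distrib_left)
  also have "(\<Sum>i<n. \<Sum>j<n. (a j)\<^sup>2 * (b i)\<^sup>2) = (\<Sum>i<n. \<Sum>j<n. (a i)\<^sup>2 * (b j)\<^sup>2)"
    by (rule sum.swap)
  also have "(\<Sum>i<n. \<Sum>j<n. (a i)\<^sup>2 * (b j)\<^sup>2) = (\<Sum>i<n. (a i)\<^sup>2) * (\<Sum>i<n. (b i)\<^sup>2)"
    by (simp add: sum_product)
  also have "(\<Sum>i<n. \<Sum>j<n. (a i * b i) * (a j * b j)) = (\<Sum>i<n. a i * b i)\<^sup>2"
    by (simp add: sum_product power2_eq_square)
  finally show ?thesis by simp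
qed

definition quad_form :: "nat \<Rightarrow> (nat \<Rightarrow> nat \<Rightarrow> real) \<Rightarrow> complex vec \<Rightarrow> complex" where
  "quad_form n f y = (\<Sum>i<n. \<Sum>j<n. cnj (y$i) * complex_of_real (f i j) * y$j)"

abbreviation mat_quad_form :: "nat \<Rightarrow> real mat \<Rightarrow> complex vec \<Rightarrow> complex" where
  "mat_quad_form n S y \<equiv> quad_form n (\<lambda>i j. S $$ (i,j)) y"

definition vnorm_sq :: "nat \<Rightarrow> complex vec \<Rightarrow> real" where
  "vnorm_sq n y = (\<Sum>i<n. (cmod (y$i))\<^sup>2)"

lemma vnorm_sq_nonneg: "0 \<le> vnorm_sq n y"
  unfolding vnorm_sq_def by (intro sum_nonneg) auto

lemma vnorm_sq_eq_0D:
  assumes "vnorm_sq n y = 0" "i < n"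
  shows "y $ i = 0"
  using assms sum_nonneg_eq_0_iff[of "{..<n}" "\<lambda>i. (cmod (y$i))\<^sup>2"]
  unfolding vnorm_sq_def by auto

lemma vnorm_sq_pos:
  assumes "y \<in> carrier_vec n" "y \<noteq> 0\<^sub>v n"
  shows "0 < vnorm_sq n y"
proof -
  have "vnorm_sq n y \<noteq> 0"
    using assms vnorm_sq_eq_0D[of n y] by (auto intro!: eq_vecI)
  then show ?thesis using vnorm_sq_nonneg[of n y] by linarith
qed

lemma vnorm_sq_scale:
  "vnorm_sq n (vec n (\<lambda>i. complex_of_real c * y $ i)) = c\<^sup>2 * vnorm_sq n y"
  unfolding vnorm_sq_def by (simp add: sum_distrib_left norm_mult power_mult_distrib)

lemma quad_form_cong:
  "(\<And>i j. i < n \<Longrightarrow> j < n \<Longrightarrow> f i j = g i j) \<Longrightarrow> quad_form n f y = quad_form n g y"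
  unfolding quad_form_def by (intro sum.cong refl) auto

lemma quad_form_add: "quad_form n (\<lambda>i j. f i j + g i j) y = quad_form n f y + quad_form n g y"
  unfolding quad_form_def by (simp add: sum.distrib algebra_simps)

lemma quad_form_smult: "quad_form n (\<lambda>i j. c * f i j) y = complex_of_real c * quad_form n f y"
  unfolding quad_form_def by (simp add: sum_distrib_left mult_ac)

lemma quad_form_scale_vec:
  "quad_form n f (vec n (\<lambda>i. complex_of_real c * y $ i)) = complex_of_real (c\<^sup>2) * quad_form n f y"
  unfolding quad_form_def by (simp add: sum_distrib_left mult_ac power2_eq_square)

lemma quad_form_transpose: "quad_form n (\<lambda>i j. f j i) y = cnj (quad_form n f y)"
proof -
  have "cnj (quad_form n f y) = (\<Sum>i<n. \<Sum>j<n. y$i * complex_of_real (f i j) * cnj (y$j))"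
    unfolding quad_form_def by simp
  also have "\<dots> = (\<Sum>j<n. \<Sum>i<n. y$i * complex_of_real (f i j) * cnj (y$j))"
    by (rule sum.swap)
  also have "\<dots> = quad_form n (\<lambda>i j. f j i) y"
    unfolding quad_form_def by (intro sum.cong refl) (simp add: mult_ac)
  finally show ?thesis by simp
qed

lemma quad_form_symmetric_real:
  assumes "\<And>i j. i < n \<Longrightarrow> j < n \<Longrightarrow> f i j = f j i"
  shows "quad_form n f y = complex_of_real (Re (quad_form n f y))"
proof -
  have "cnj (quad_form n f y) = quad_form n f y"
    using quad_form_transpose[of n f y] quad_form_cong[of n f "\<lambda>i j. f j i" y] assms by simp
  then have "Im (quad_form n f y) = 0" by (metis Reals_cnj_iff complex_is_Real_iff)
  then show ?thesis by (simp add: complex_eq_iff)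
qed

lemma quad_form_identity: "quad_form n (\<lambda>i j. if i = j then 1 else 0) y = complex_of_real (vnorm_sq n y)"
proof -
  have "quad_form n (\<lambda>i j. if i = j then 1 else 0) y = (\<Sum>i<n. cnj (y$i) * y$i)"
    unfolding quad_form_def
  proof (intro sum.cong refl)
    fix i assume i: "i \<in> {..<n}"
    have "(\<Sum>j<n. cnj (y$i) * complex_of_real (if i = j then 1 else 0) * y$j)
        = (\<Sum>j<n. if i = j then cnj (y$i) * y$j else 0)"
      by (intro sum.cong refl) auto
    then show "(\<Sum>j<n. cnj (y$i) * complex_of_real (if i = j then 1 else 0) * y$j) = cnj (y$i) * y$i"
      using i by (simp add: sum.delta)
  qed
  also have "\<dots> = (\<Sum>i<n. complex_of_real ((cmod (y$i))\<^sup>2))"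
    by (intro sum.cong refl) (simp add: complex_norm_square mult.commute del: of_real_power)
  finally show ?thesis unfolding vnorm_sq_def by simp
qed

lemma quad_form_vnorm_sq_0:
  assumes "vnorm_sq n y = 0"
  shows "quad_form n f y = 0"
  unfolding quad_form_def using vnorm_sq_eq_0D[OF assms] by simp

lemma cmod_quad_form_le_entry_bound:
  assumes c: "\<And>i j. i < n \<Longrightarrow> j < n \<Longrightarrow> \<bar>f i j\<bar> \<le> c"
  shows "cmod (quad_form n f y) \<le> c * real n * vnorm_sq n y"
proof (cases "n = 0")
  case False
  then have c0: "0 \<le> c" using c[of 0 0] by auto
  have "cmod (quad_form n f y) \<le> (\<Sum>i<n. \<Sum>j<n. cmod (y$i) * c * cmod (y$j))"
    unfolding quad_form_def
  proof (rule order.trans[OF norm_sum], intro sum_mono, rule order.trans[OF norm_sum], intro sum_mono)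
    fix i j assume "i \<in> {..<n}" "j \<in> {..<n}"
    then show "cmod (cnj (y $ i) * complex_of_real (f i j) * y $ j) \<le> cmod (y $ i) * c * cmod (y $ j)"
      using c by (simp add: norm_mult mult_mono mult_right_mono)
  qed
  also have "\<dots> = c * (\<Sum>i<n. 1 * cmod (y$i))\<^sup>2"
    by (simp add: power2_eq_square sum_product sum_distrib_left mult_ac)
  also have "\<dots> \<le> c * ((\<Sum>i<n. 1\<^sup>2) * vnorm_sq n y)"
    unfolding vnorm_sq_def by (intro mult_left_mono sum_product_square_le c0)
  finally show ?thesis by simp
qed (simp add: quad_form_def)

text \<open>Cauchy-Schwarz applied to \<open>y\<^sup>* (F y)\<close>; for symmetric \<open>F\<close> one has \<open>|F y|\<^sup>2 = y\<^sup>* F\<^sup>2 y\<close>.\<close>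
lemma cmod_quad_form_square_le:
  assumes sym: "\<And>i j. i < n \<Longrightarrow> j < n \<Longrightarrow> f i j = f j i"
  shows "(cmod (quad_form n f y))\<^sup>2 \<le> vnorm_sq n y * Re (quad_form n (\<lambda>i j. \<Sum>k<n. f i k * f k j) y)"
proof -
  define w where "w k = (\<Sum>j<n. complex_of_real (f k j) * y$j)" for k
  have "quad_form n f y = (\<Sum>i<n. cnj (y$i) * w i)"
    unfolding quad_form_def w_def by (simp add: sum_distrib_left mult.assoc)
  then have "cmod (quad_form n f y) \<le> (\<Sum>i<n. cmod (y$i) * cmod (w i))"
    by (simp add: order.trans[OF norm_sum] norm_mult)
  then have "(cmod (quad_form n f y))\<^sup>2 \<le> (\<Sum>i<n. cmod (y$i) * cmod (w i))\<^sup>2"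
    by (intro power_mono) auto
  also have "\<dots> \<le> vnorm_sq n y * (\<Sum>i<n. (cmod (w i))\<^sup>2)"
    unfolding vnorm_sq_def by (rule sum_product_square_le)
  also have "(\<Sum>i<n. (cmod (w i))\<^sup>2) = Re (quad_form n (\<lambda>i j. \<Sum>k<n. f i k * f k j) y)"
  proof -
    have "quad_form n (\<lambda>i j. \<Sum>k<n. f i k * f k j) y
       = (\<Sum>i<n. \<Sum>j<n. \<Sum>k<n. cnj (y$i) * complex_of_real (f i k) * (complex_of_real (f k j) * y$j))"
      unfolding quad_form_def by (simp add: sum_distrib_left sum_distrib_right mult.assoc)
    also have "\<dots> = (\<Sum>k<n. \<Sum>i<n. \<Sum>j<n. cnj (y$i) * complex_of_real (f i k) * (complex_of_real (f k j) * y$j))"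
      by (subst sum.swap) (intro sum.cong refl sum.swap)
    also have "\<dots> = (\<Sum>k<n. cnj (w k) * w k)"
    proof (intro sum.cong refl)
      fix k assume "k \<in> {..<n}"
      then have cnj_w: "cnj (w k) = (\<Sum>i<n. cnj (y$i) * complex_of_real (f i k))"
        unfolding w_def by (simp add: sym mult.commute)
      show "(\<Sum>i<n. \<Sum>j<n. cnj (y$i) * complex_of_real (f i k) * (complex_of_real (f k j) * y$j))
          = cnj (w k) * w k"
        unfolding cnj_w unfolding w_def sum_product by simp
    qed
    also have "\<dots> = (\<Sum>k<n. complex_of_real ((cmod (w k))\<^sup>2))"
      by (intro sum.cong refl) (simp add: complex_norm_square mult.commute del: of_real_power)
    finally show ?thesis by simp
  qed
  finally show ?thesis .
qed

lemma index_mult_mat_sum: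
  assumes "A \<in> carrier_mat n n" "B \<in> carrier_mat n n" "i < n" "j < n"
  shows "(A * B) $$ (i,j) = (\<Sum>k<n. A $$ (i,k) * B $$ (k,j))"
  using assms by (simp add: scalar_prod_def atLeast0LessThan)

lemma pow_mat_add:
  assumes S: "S \<in> carrier_mat n n"
  shows "S ^\<^sub>m a * S ^\<^sub>m b = S ^\<^sub>m (a + b)"
proof (induction b)
  case (Suc b)
  have "S ^\<^sub>m a * S ^\<^sub>m Suc b = (S ^\<^sub>m a * S ^\<^sub>m b) * S"
    using S by (simp add: assoc_mult_mat[of _ n n _ n _ n])
  then show ?case using Suc by simp
qed (use S in simp)

lemma symmetric_mat_index:
  assumes "S \<in> carrier_mat n n" "transpose_mat S = S" "i < n" "j < n"
  shows "S $$ (i,j) = S $$ (j,i)"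
  using assms by (metis carrier_matD index_transpose_mat(1))

lemma transpose_pow_mat_symmetric:
  fixes S :: "'a :: comm_semiring_1 mat"
  assumes S: "S \<in> carrier_mat n n" and sym: "transpose_mat S = S"
  shows "transpose_mat (S ^\<^sub>m k) = S ^\<^sub>m k"
proof (induction k)
  case (Suc k)
  have "transpose_mat (S ^\<^sub>m Suc k) = S * S ^\<^sub>m k"
    using transpose_mult[OF pow_carrier_mat[OF S] S] Suc sym by simp
  also have "\<dots> = S ^\<^sub>m Suc k"
    using pow_mat_add[OF S, of 1 k] S by simp
  finally show ?case .
qed (use S in simp)

lemma cmod_quad_form_pow_double:
  assumes S: "S \<in> carrier_mat n n" and sym: "transpose_mat S = S" and y: "vnorm_sq n y = 1"
  shows "(cmod (mat_quad_form n (S ^\<^sub>m k) y))\<^sup>2 \<le> cmod (mat_quad_form n (S ^\<^sub>m (k + k)) y)"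
proof -
  have Sk: "S ^\<^sub>m k \<in> carrier_mat n n" using S by simp
  have "(cmod (mat_quad_form n (S ^\<^sub>m k) y))\<^sup>2
     \<le> Re (quad_form n (\<lambda>i j. \<Sum>l<n. (S ^\<^sub>m k) $$ (i,l) * (S ^\<^sub>m k) $$ (l,j)) y)"
    using cmod_quad_form_square_le[of n "\<lambda>i j. (S ^\<^sub>m k) $$ (i,j)" y] y
      symmetric_mat_index[OF Sk transpose_pow_mat_symmetric[OF S sym]] by simp
  also have "quad_form n (\<lambda>i j. \<Sum>l<n. (S ^\<^sub>m k) $$ (i,l) * (S ^\<^sub>m k) $$ (l,j)) y
       = mat_quad_form n (S ^\<^sub>m k * S ^\<^sub>m k) y"
    by (rule quad_form_cong) (simp add: index_mult_mat_sum[OF Sk Sk])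
  also have "S ^\<^sub>m k * S ^\<^sub>m k = S ^\<^sub>m (k + k)"
    by (rule pow_mat_add[OF S])
  finally show ?thesis using complex_Re_le_cmod order.trans by blast
qed

lemma cmod_quad_form_pow_2_pow:
  assumes S: "S \<in> carrier_mat n n" and sym: "transpose_mat S = S" and y: "vnorm_sq n y = 1"
  shows "cmod (mat_quad_form n S y) ^ (2 ^ m) \<le> cmod (mat_quad_form n (S ^\<^sub>m (2 ^ m)) y)"
proof (induction m)
  case (Suc m)
  have "cmod (mat_quad_form n S y) ^ (2 ^ Suc m) = (cmod (mat_quad_form n S y) ^ (2 ^ m))\<^sup>2"
    by (simp add: power_mult[symmetric] mult.commute)
  also have "\<dots> \<le> (cmod (mat_quad_form n (S ^\<^sub>m (2 ^ m)) y))\<^sup>2"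
    using Suc by (intro power_mono) auto
  also have "\<dots> \<le> cmod (mat_quad_form n (S ^\<^sub>m (2 ^ Suc m)) y)"
    using cmod_quad_form_pow_double[OF S sym y, of "2 ^ m"] by (simp add: mult_2)
  finally show ?case .
qed (use S in simp)

lemma cmod_quad_form_le_vnorm_sq_from_unit:
  assumes unit: "\<And>z. vnorm_sq n z = 1 \<Longrightarrow> cmod (quad_form n f z) \<le> 1"
  shows "cmod (quad_form n f y) \<le> vnorm_sq n y"
proof (cases "vnorm_sq n y = 0")
  case False
  define N where "N = vnorm_sq n y"
  have N: "0 < N" using False vnorm_sq_nonneg[of n y] unfolding N_def by linarith
  define z where "z = vec n (\<lambda>i. complex_of_real (1 / sqrt N) * y $ i)"
  have "vnorm_sq n z = 1"
    unfolding z_def vnorm_sq_scale N_def[symmetric] using N by (simp add: power_divide)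
  moreover have "quad_form n f z = complex_of_real (1 / N) * quad_form n f y"
    unfolding z_def quad_form_scale_vec using N by (simp add: power_divide)
  ultimately have "cmod (quad_form n f y) / N \<le> 1"
    using unit[of z] N by (simp add: norm_mult norm_divide)
  then show ?thesis using N unfolding N_def by simp
qed (simp add: quad_form_vnorm_sq_0)

text \<open>The powers of a matrix of spectral radius below 1 are bounded, while by
  the doubling inequality a unit Rayleigh quotient above 1 would make them grow.\<close>
lemma cmod_quad_form_le_vnorm_sq_if_spectral_radius_lt_1:
  assumes S: "S \<in> carrier_mat n n" and sym: "transpose_mat S = S"
    and rho: "spectral_radius (map_mat complex_of_real S) < 1"
  shows "cmod (mat_quad_form n S y) \<le> vnorm_sq n y"
proof (rule cmod_quad_form_le_vnorm_sq_from_unit)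
  fix z assume z: "vnorm_sq n z = 1"
  obtain c where c: "\<And>k. norm_bound (map_mat complex_of_real S ^\<^sub>m k) c"
    using spectral_radius_jnf_norm_bound_less_1_upper_triangular[OF _ rho] S by fastforce
  have entry_bound: "\<bar>(S ^\<^sub>m k) $$ (i,j)\<bar> \<le> c" if "i < n" "j < n" for k i j
    using c[of k] that S unfolding norm_bound_def of_real_hom.mat_hom_pow[OF S, symmetric] by auto
  have bounded: "cmod (mat_quad_form n S z) ^ (2 ^ m) \<le> c * real n" for m
  proof -
    have "cmod (mat_quad_form n (S ^\<^sub>m (2 ^ m)) z) \<le> c * real n * vnorm_sq n z"
      by (rule cmod_quad_form_le_entry_bound) (rule entry_bound)
    then show ?thesis using cmod_quad_form_pow_2_pow[OF S sym z, of m] z by simp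
  qed
  show "cmod (mat_quad_form n S z) \<le> 1"
  proof (rule ccontr)
    assume "\<not> ?thesis"
    then have q: "1 < cmod (mat_quad_form n S z)" by simp
    then obtain k where "c * real n < cmod (mat_quad_form n S z) ^ k"
      using real_arch_pow by blast
    also have "\<dots> \<le> cmod (mat_quad_form n S z) ^ (2 ^ k)"
      using q by (intro power_increasing) (auto intro: less_imp_le less_exp)
    finally show False using bounded[of k] by simp
  qed
qed

lemma eigenvalue_smult:
  assumes A: "A \<in> carrier_mat n n" and ev: "eigenvalue A \<mu>"
  shows "eigenvalue (c \<cdot>\<^sub>m A) (c * \<mu>)"
proof -
  obtain v where v: "v \<in> carrier_vec n" "v \<noteq> 0\<^sub>v n" "A *\<^sub>v v = \<mu> \<cdot>\<^sub>v v"
    using ev A unfolding eigenvalue_def eigenvector_def by auto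
  have "(c \<cdot>\<^sub>m A) *\<^sub>v v = c \<cdot>\<^sub>v (A *\<^sub>v v)"
    using A v(1) by (intro eq_vecI) auto
  also have "\<dots> = (c * \<mu>) \<cdot>\<^sub>v v"
    unfolding v(3) by (simp add: smult_smult_assoc)
  finally show ?thesis
    using v A unfolding eigenvalue_def eigenvector_def by auto
qed

lemma spectral_radius_smult_lt_1:
  assumes A: "A \<in> carrier_mat n n" and n: "0 < n" and r: "0 < r"
    and lt: "spectral_radius A < r"
  shows "spectral_radius (complex_of_real (1 / r) \<cdot>\<^sub>m A) < 1"
proof -
  let ?A' = "complex_of_real (1 / r) \<cdot>\<^sub>m A"
  have A': "?A' \<in> carrier_mat n n" using A by simp
  obtain \<mu> where \<mu>: "eigenvalue ?A' \<mu>" and eq: "spectral_radius ?A' = cmod \<mu>"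
    using spectral_radius_mem_max(1)[OF A' n] unfolding spectrum_def by auto
  have "complex_of_real r \<cdot>\<^sub>m ?A' = A"
    using A r by (intro eq_matI) auto
  then have "eigenvalue A (complex_of_real r * \<mu>)"
    using eigenvalue_smult[OF A' \<mu>, of "complex_of_real r"] by simp
  then have "cmod (complex_of_real r * \<mu>) \<le> spectral_radius A"
    by (intro spectral_radius_mem_max(2)[OF A n]) (auto simp: spectrum_def)
  then have "r * cmod \<mu> \<le> spectral_radius A"
    using r by (simp add: norm_mult)
  with lt have "r * cmod \<mu> < r * 1" by simp
  then show ?thesis using eq r by (simp only: mult_less_cancel_left_pos)
qed

lemma cmod_quad_form_le_spectral_radius:
  assumes S: "S \<in> carrier_mat n n" and sym: "transpose_mat S = S"
  shows "cmod (mat_quad_form n S y) \<le> spectral_radius (map_mat complex_of_real S) * vnorm_sq n y"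
proof (cases "vnorm_sq n y = 0")
  case False
  let ?rho = "spectral_radius (map_mat complex_of_real S)"
  have N: "0 < vnorm_sq n y" using False vnorm_sq_nonneg[of n y] by linarith
  then have n: "0 < n" unfolding vnorm_sq_def by (cases n) auto
  have "cmod (mat_quad_form n S y) / vnorm_sq n y \<le> r" if r: "?rho < r" for r
  proof -
    have "0 \<le> ?rho"
      using spectral_radius_mem_max(1)[of "map_mat complex_of_real S" n] S n by auto
    with r have r0: "0 < r" by simp
    let ?S' = "(1 / r) \<cdot>\<^sub>m S"
    have S': "?S' \<in> carrier_mat n n" using S by simp
    have "transpose_mat ?S' = ?S'"
      using S sym symmetric_mat_index[OF S sym] by (intro eq_matI) auto
    moreover have "map_mat complex_of_real ?S' = complex_of_real (1 / r) \<cdot>\<^sub>m map_mat complex_of_real S"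
      by (intro eq_matI) auto
    then have "spectral_radius (map_mat complex_of_real ?S') < 1"
      using spectral_radius_smult_lt_1[OF _ n r0 r] S by simp
    ultimately have "cmod (mat_quad_form n ?S' y) \<le> vnorm_sq n y"
      by (intro cmod_quad_form_le_vnorm_sq_if_spectral_radius_lt_1[OF S'])
    moreover have "mat_quad_form n ?S' y = complex_of_real (1 / r) * mat_quad_form n S y"
      using S by (subst quad_form_smult[symmetric], intro quad_form_cong) simp
    ultimately have "cmod (mat_quad_form n S y) / r \<le> vnorm_sq n y"
      using r0 by (simp add: norm_mult norm_divide)
    then show ?thesis
      using r0 N by (simp add: pos_divide_le_eq mult.commute)
  qed
  then have "cmod (mat_quad_form n S y) / vnorm_sq n y \<le> ?rho"
    by (rule dense_ge)
  then show ?thesis using N by (simp add: divide_le_eq)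
qed (simp add: quad_form_vnorm_sq_0)

lemma quad_form_same_label_eq_sum:
  "quad_form n (\<lambda>i j. if l i = l j then f i j else 0) y
     = (\<Sum>s\<in>l ` {..<n}. quad_form n f (vec n (\<lambda>i. if l i = s then y $ i else 0)))"
proof -
  have "(\<Sum>s\<in>l ` {..<n}. quad_form n f (vec n (\<lambda>i. if l i = s then y $ i else 0)))
      = (\<Sum>s\<in>l ` {..<n}. \<Sum>i<n. \<Sum>j<n. if s = l i \<and> l j = l i
           then cnj (y$i) * complex_of_real (f i j) * y$j else 0)"
    unfolding quad_form_def by (intro sum.cong refl) auto
  also have "\<dots> = (\<Sum>i<n. \<Sum>j<n. \<Sum>s\<in>l ` {..<n}. if s = l i \<and> l j = l i
           then cnj (y$i) * complex_of_real (f i j) * y$j else 0)"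
    by (subst sum.swap) (intro sum.cong refl sum.swap)
  also have "\<dots> = quad_form n (\<lambda>i j. if l i = l j then f i j else 0) y"
    unfolding quad_form_def by (intro sum.cong refl) (auto simp: sum.delta')
  finally show ?thesis by simp
qed

lemma vnorm_sq_eq_sum_label:
  "vnorm_sq n y = (\<Sum>s\<in>l ` {..<n}. vnorm_sq n (vec n (\<lambda>i. if l i = s then y $ i else 0)))"
proof -
  have "(\<Sum>s\<in>l ` {..<n}. vnorm_sq n (vec n (\<lambda>i. if l i = s then y $ i else 0)))
      = (\<Sum>s\<in>l ` {..<n}. \<Sum>i<n. if s = l i then (cmod (y$i))\<^sup>2 else 0)"
    unfolding vnorm_sq_def by (intro sum.cong refl) auto
  also have "\<dots> = (\<Sum>i<n. \<Sum>s\<in>l ` {..<n}. if s = l i then (cmod (y$i))\<^sup>2 else 0)"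
    by (rule sum.swap)
  also have "\<dots> = vnorm_sq n y"
    unfolding vnorm_sq_def by (intro sum.cong refl) (auto simp: sum.delta')
  finally show ?thesis by simp
qed

text \<open>The same-label part of \<open>S\<close> is the direct sum of principal submatrices of \<open>S\<close>; each
  piece is bounded by the Rayleigh bound for \<open>S\<close> itself, applied to the restriction of the vector.\<close>
lemma re_quad_form_same_label_le_spectral_radius:
  assumes S: "S \<in> carrier_mat n n" and sym: "transpose_mat S = S"
  shows "Re (quad_form n (\<lambda>i j. if l i = l j then S $$ (i,j) else 0) y)
      \<le> spectral_radius (map_mat complex_of_real S) * vnorm_sq n y"
proof -
  let ?rho = "spectral_radius (map_mat complex_of_real S)"
  let ?y = "\<lambda>s. vec n (\<lambda>i. if l i = s then y $ i else 0)"
  have "Re (quad_form n (\<lambda>i j. if l i = l j then S $$ (i,j) else 0) y)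
      \<le> cmod (\<Sum>s\<in>l ` {..<n}. mat_quad_form n S (?y s))"
    unfolding quad_form_same_label_eq_sum by (rule complex_Re_le_cmod)
  also have "\<dots> \<le> (\<Sum>s\<in>l ` {..<n}. ?rho * vnorm_sq n (?y s))"
    by (rule order.trans[OF norm_sum], intro sum_mono cmod_quad_form_le_spectral_radius[OF S sym])
  also have "\<dots> = ?rho * vnorm_sq n y"
    by (simp add: vnorm_sq_eq_sum_label[of n y l] sum_distrib_left)
  finally show ?thesis .
qed

lemma re_quad_form_block_strict_upper_split:
  assumes B: "B \<in> carrier_mat n n" and sym: "transpose_mat B = B"
  shows "Re (mat_quad_form n B y)
    = 2 * Re (mat_quad_form n (block_strict_upper ns B) y)
      + Re (quad_form n (\<lambda>i j. if block_of ns i = block_of ns j then B $$ (i,j) else 0) y)"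
proof -
  let ?U = "block_strict_upper ns B"
  have "mat_quad_form n B y = quad_form n (\<lambda>i j. (?U $$ (i,j) + ?U $$ (j,i))
      + (if block_of ns i = block_of ns j then B $$ (i,j) else 0)) y"
    using B symmetric_mat_index[OF B sym]
    by (intro quad_form_cong) (auto simp: block_strict_upper_def)
  moreover have "quad_form n (\<lambda>i j. ?U $$ (j,i)) y = cnj (mat_quad_form n ?U y)"
    by (rule quad_form_transpose)
  ultimately show ?thesis
    unfolding quad_form_add by simp
qed

lemma ge_inverse_from_rayleigh_bounds:
  fixes x \<beta> \<rho> t N a b :: real
  assumes \<rho>: "0 < \<rho>" and \<beta>: "0 < \<beta>" "\<beta> * \<rho> < 1" and t: "0 \<le> t" "t \<le> 1"
    and N: "0 < N" and x: "0 < x"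
    and eq: "x * \<beta> * b = N + t * \<beta> * a"
    and a: "b - \<rho> * N \<le> 2 * a" and b: "\<bar>b\<bar> \<le> \<rho> * N"
  shows "1 / (\<beta> * \<rho>) \<le> x"
proof -
  have "\<beta> * (b - \<rho> * N) / 2 \<le> t * \<beta> * a"
  proof (cases "0 \<le> a")
    case True
    have "\<beta> * (b - \<rho> * N) \<le> 0" using b \<beta> by (simp add: mult_nonneg_nonpos abs_le_iff)
    moreover have "0 \<le> t * \<beta> * a" using True \<beta> t by simp
    ultimately show ?thesis by simp
  next
    case False
    have "\<beta> * (b - \<rho> * N) / 2 \<le> \<beta> * a" using a \<beta> by simp
    also have "\<dots> \<le> t * \<beta> * a"
    proof -
      have "(1 - t) * (\<beta> * a) \<le> 0"
        using False \<beta> t by (intro mult_nonneg_nonpos) (auto simp: mult_pos_neg less_imp_le)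
      then show ?thesis by (simp add: algebra_simps)
    qed
    finally show ?thesis .
  qed
  then have lower: "N * (1 - \<beta> * \<rho> / 2) + \<beta> * b / 2 \<le> x * \<beta> * b"
    using eq by (simp add: algebra_simps)
  have b_pos: "0 < b"
  proof (rule ccontr)
    assume "\<not> 0 < b"
    then have "x * \<beta> * b \<le> 0" using x \<beta> by (simp add: mult_nonneg_nonpos)
    moreover have "\<beta> * (- \<rho> * N) \<le> \<beta> * b" using b \<beta> by (intro mult_left_mono) auto
    moreover have "N * (\<beta> * \<rho>) < N" using \<beta> N by simp
    ultimately show False using lower by (simp add: algebra_simps)
  qed
  have "b / \<rho> * (1 - \<beta> * \<rho> / 2) \<le> N * (1 - \<beta> * \<rho> / 2)"
    using b \<rho> \<beta> by (intro mult_right_mono) (auto simp: divide_le_eq abs_le_iff mult.commute)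
  then have "b / \<rho> \<le> x * (\<beta> * b)"
    using lower \<rho> by (simp add: algebra_simps)
  then show ?thesis
    using b_pos \<beta> \<rho> by (simp add: divide_le_eq mult.commute mult.left_commute)
qed

lemma smult_invertible_mat_Units:
  fixes B :: "'a :: field mat"
  assumes B: "B \<in> carrier_mat n n" and inv: "invertible_mat B" and c: "c \<noteq> 0"
  shows "c \<cdot>\<^sub>m B \<in> Units (ring_mat TYPE('a) n b)"
proof -
  obtain B' where BB': "B * B' = 1\<^sub>m n" and B'B: "B' * B = 1\<^sub>m (dim_row B')"
    using inv B unfolding invertible_mat_def inverts_mat_def by auto
  have B': "B' \<in> carrier_mat n n"
    using arg_cong[OF BB', of dim_col] arg_cong[OF B'B, of dim_col] B by auto
  have "(c \<cdot>\<^sub>m B) * ((1 / c) \<cdot>\<^sub>m B') = (1 / c) \<cdot>\<^sub>m (c \<cdot>\<^sub>m (B * B'))"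
    "((1 / c) \<cdot>\<^sub>m B') * (c \<cdot>\<^sub>m B) = c \<cdot>\<^sub>m ((1 / c) \<cdot>\<^sub>m (B' * B))"
    using B B' by (simp_all add: mult_smult_assoc_mat[of _ n n _ n] mult_smult_distrib[of _ n n _ n])
  moreover have "(1 / c) \<cdot>\<^sub>m (c \<cdot>\<^sub>m (B * B')) = 1\<^sub>m n" "c \<cdot>\<^sub>m ((1 / c) \<cdot>\<^sub>m (B' * B)) = 1\<^sub>m n"
    using BB' B'B B' c by (auto intro!: eq_matI)
  ultimately show ?thesis
    using B B' unfolding Units_def ring_mat_def by (auto intro!: bexI[of _ "(1 / c) \<cdot>\<^sub>m B'"])
qed

lemma inv_mat_right_inverse:
  fixes A :: "'a :: field mat"
  assumes A: "A \<in> carrier_mat n n" and unit: "A \<in> Units (ring_mat TYPE('a) n b)"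
  shows "A * inv_mat A = 1\<^sub>m n" "inv_mat A \<in> carrier_mat n n"
proof -
  have "mat_inverse A \<noteq> None"
    using mat_inverse(1)[OF A, of b] unit by blast
  then obtain X where X: "mat_inverse A = Some X" by auto
  then show "A * inv_mat A = 1\<^sub>m n" "inv_mat A \<in> carrier_mat n n"
    using mat_inverse(2)[OF A X] unfolding inv_mat_def by auto
qed

lemma mat_quad_form_eq_sum_mult_mat_vec:
  assumes "S \<in> carrier_mat n n" "v \<in> carrier_vec n"
  shows "mat_quad_form n S v = (\<Sum>i<n. cnj (v $ i) * (map_mat complex_of_real S *\<^sub>v v) $ i)"
  using assms unfolding quad_form_def
  by (auto simp: scalar_prod_def atLeast0LessThan sum_distrib_left mult.assoc intro!: sum.cong)

text \<open>If \<open>A X = I\<close> and \<open>X M v = \<lambda> v\<close>, then \<open>M v = \<lambda> A v\<close>; pairing with \<open>v\<close> gives a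
  generalised Rayleigh quotient for \<open>\<lambda>\<close>.\<close>
lemma eigenvector_quad_form_eq:
  assumes A: "A \<in> carrier_mat n n" and X: "X \<in> carrier_mat n n" and AX: "A * X = 1\<^sub>m n"
    and M: "M \<in> carrier_mat n n"
    and ev: "eigenvector (map_mat complex_of_real (X * M)) v lam"
  shows "lam * mat_quad_form n A v = mat_quad_form n M v"
proof -
  let ?c = "map_mat complex_of_real"
  have v: "v \<in> carrier_vec n" and Xv: "?c (X * M) *\<^sub>v v = lam \<cdot>\<^sub>v v"
    using ev X M unfolding eigenvector_def by auto
  have "?c M *\<^sub>v v = ?c (A * (X * M)) *\<^sub>v v"
    using A X M AX by (simp add: assoc_mult_mat[symmetric, of _ n n _ n _ n])
  also have "\<dots> = (?c A * ?c (X * M)) *\<^sub>v v"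
    using A X M by (subst of_real_hom.mat_hom_mult[of A n n "X * M" n]) auto
  also have "\<dots> = ?c A *\<^sub>v (?c (X * M) *\<^sub>v v)"
    using A X M v by (intro assoc_mult_mat_vec) auto
  also have "\<dots> = lam \<cdot>\<^sub>v (?c A *\<^sub>v v)"
    unfolding Xv using A v by (simp add: mult_mat_vec)
  finally have Mv: "?c M *\<^sub>v v = lam \<cdot>\<^sub>v (?c A *\<^sub>v v)" .
  show ?thesis
    using A M v unfolding mat_quad_form_eq_sum_mult_mat_vec[OF A v] mat_quad_form_eq_sum_mult_mat_vec[OF M v] Mv
    by (simp add: sum_distrib_left mult_ac)
qed

lemma re_eigenvalue_quad_form_eq:
  assumes B: "B \<in> carrier_mat n n" "transpose_mat B = B" and U: "U \<in> carrier_mat n n"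
    and X: "X \<in> carrier_mat n n" "(\<beta> \<cdot>\<^sub>m B) * X = 1\<^sub>m n"
    and ev: "eigenvector (map_mat complex_of_real (X * (1\<^sub>m n + (t * \<beta>) \<cdot>\<^sub>m U))) v lam"
  shows "Re lam * \<beta> * Re (mat_quad_form n B v)
    = vnorm_sq n v + t * \<beta> * Re (mat_quad_form n U v)"
proof -
  let ?b = "Re (mat_quad_form n B v)"
  have qB: "mat_quad_form n B v = complex_of_real ?b"
    using symmetric_mat_index[OF B] by (intro quad_form_symmetric_real)
  have "lam * mat_quad_form n (\<beta> \<cdot>\<^sub>m B) v = mat_quad_form n (1\<^sub>m n + (t * \<beta>) \<cdot>\<^sub>m U) v"
    using eigenvector_quad_form_eq[OF _ X _ ev] B U by simp
  also have "mat_quad_form n (\<beta> \<cdot>\<^sub>m B) v = complex_of_real \<beta> * complex_of_real ?b"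
    unfolding qB[symmetric] quad_form_smult[symmetric] using B by (intro quad_form_cong) simp
  also have "mat_quad_form n (1\<^sub>m n + (t * \<beta>) \<cdot>\<^sub>m U) v
      = complex_of_real (vnorm_sq n v) + complex_of_real (t * \<beta>) * mat_quad_form n U v"
    using U unfolding quad_form_identity[symmetric] quad_form_smult[symmetric] quad_form_add[symmetric]
    by (intro quad_form_cong) simp
  finally show ?thesis
    by (subst (asm) complex_eq_iff) (simp add: mult.assoc)
qed

theorem lemma13:
  fixes B :: "real mat" and ns :: "nat list" and n :: nat
    and \<beta> t :: real and lam :: complex
  assumes ns_pos: "\<forall>s \<in> set ns. 0 < s"
    and ns_sum: "sum_list ns = n"
    and B_dim: "B \<in> carrier_mat n n"
    and B_sym: "transpose_mat B = B"
    and B_inv: "invertible_mat B"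
    and beta_pos: "0 < \<beta>"
    and beta_lt: "\<beta> < 1 / spectral_radius (map_mat complex_of_real B)"
    and t_range: "0 \<le> t" "t \<le> 1"
    and eig: "eigenvalue (map_mat complex_of_real
                 (inv_mat (\<beta> \<cdot>\<^sub>m B) * (1\<^sub>m n + (t * \<beta>) \<cdot>\<^sub>m block_strict_upper ns B))) lam"
    and re_pos: "Re lam > 0"
  shows "Re lam \<ge> 1/2 + (1 - \<beta> * spectral_radius (map_mat complex_of_real B))
                        / (\<beta> * spectral_radius (map_mat complex_of_real B))
       \<and> 1/2 + (1 - \<beta> * spectral_radius (map_mat complex_of_real B))
                        / (\<beta> * spectral_radius (map_mat complex_of_real B)) > 1/2"
proof -
  let ?rho = "spectral_radius (map_mat complex_of_real B)"
  \<comment> \<open>Only the labelling \<open>block_of ns\<close> matters.\<close>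
  let ?U = "block_strict_upper ns B"
  let ?M = "1\<^sub>m n + (t * \<beta>) \<cdot>\<^sub>m ?U"
  have U: "?U \<in> carrier_mat n n" using B_dim by (simp add: block_strict_upper_def)
  have unit: "\<beta> \<cdot>\<^sub>m B \<in> Units (ring_mat TYPE(real) n ())"
    using smult_invertible_mat_Units[OF B_dim B_inv, of \<beta> "()"] beta_pos by simp
  have inv: "\<beta> \<cdot>\<^sub>m B * inv_mat (\<beta> \<cdot>\<^sub>m B) = 1\<^sub>m n" "inv_mat (\<beta> \<cdot>\<^sub>m B) \<in> carrier_mat n n"
    using inv_mat_right_inverse[OF _ unit] B_dim by auto
  obtain v where v: "eigenvector (map_mat complex_of_real (inv_mat (\<beta> \<cdot>\<^sub>m B) * ?M)) v lam"
    using eig unfolding eigenvalue_def by blast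
  have v_pos: "0 < vnorm_sq n v"
    using v inv(2) by (intro vnorm_sq_pos) (auto simp: eigenvector_def)
  have rho: "0 < ?rho" \<comment> \<open>as \<open>1 / 0 = 0\<close>, \<open>beta_lt\<close> rules out \<open>?rho = 0\<close>\<close>
    using beta_lt beta_pos by (smt (verit) divide_le_0_1_iff)
  have brho: "\<beta> * ?rho < 1" using beta_lt rho by (simp add: field_simps)
  have "Re lam * \<beta> * Re (mat_quad_form n B v) = vnorm_sq n v + t * \<beta> * Re (mat_quad_form n ?U v)"
    by (rule re_eigenvalue_quad_form_eq[OF B_dim B_sym U inv(2,1) v])
  moreover have "Re (mat_quad_form n B v) - ?rho * vnorm_sq n v \<le> 2 * Re (mat_quad_form n ?U v)"
    using re_quad_form_block_strict_upper_split[OF B_dim B_sym, of v ns]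
      re_quad_form_same_label_le_spectral_radius[OF B_dim B_sym, of "block_of ns" v] by simp
  moreover have "\<bar>Re (mat_quad_form n B v)\<bar> \<le> ?rho * vnorm_sq n v"
    using abs_Re_le_cmod[of "mat_quad_form n B v"] cmod_quad_form_le_spectral_radius[OF B_dim B_sym, of v]
    by linarith
  ultimately have "1 / (\<beta> * ?rho) \<le> Re lam"
    by (rule ge_inverse_from_rayleigh_bounds[OF rho beta_pos brho t_range v_pos re_pos])
  moreover have "1/2 + (1 - \<beta> * ?rho) / (\<beta> * ?rho) = 1 / (\<beta> * ?rho) - 1/2"
    using beta_pos rho by (simp add: field_simps)
  moreover have "0 < (1 - \<beta> * ?rho) / (\<beta> * ?rho)"
    using beta_pos rho brho by simp
  ultimately show ?thesis by simp
qed

end
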